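(* Fix integers $k,d\ge 1$ and let $\mathcal{M}$ be the metric space of (equivalence classes of) measurable $k$-colorings of $\mathbb{R}^d$ described in the context. For every integer $n\geq 1$ and all integers $r_1,\dots,r_d\geq 1$, the set $B_n^{(r_1,\dots,r_d)}$ is a closed subset of $\mathcal{M}$.
   Context: A measurable $k$-coloring of $\mathbb{R}^d$ is a map $f:\mathbb{R}^d\to\{1,\dots,k\}$ whose color classes are Lebesgue measurable. For measurable colorings $f,g$ and integer $n\ge1$, let $D_n(f,g)=\{x\in[-n,n]^d: f(x)\neq g(x)\}$, $d_n(f,g)=\lambda(D_n(f,g))/n^d$ where $\lambda$ is $d$-dimensional Lebesgue measure, and $d(f,g)=\sum_{n=1}^\infty d_n(f,g)/2^{n+1}$. $\mathcal{M}$ is the metric space obtained by identifying colorings at distance $0$, with metric $d$. A cube is a product of $d$ non-degenerate intervals of equal length. A splitting of a cube $[a_1,b_1]\times\cdots\times[a_d,b_d]$ with exactly $r_i$ cuts in the $i$-th dimension is given by points $a_i=z^i_0<z^i_1<\dots<z^i_{r_i}<z^i_{r_i+1}=b_i$ for each $i$, cutting the cube into the cuboids $\prod_i[z^i_{j_i},z^i_{j_i+1}]$; its granularity is the minimum of the lengths $z^i_{j+1}-z^i_j$ over all $i,j$. The splitting is fair for $f$ if the cuboids can be partitioned into two families each of whose unions contains exactly half of the Lebesgue measure of each color class of $f$ within the cube. $B_n^{(r_1,\dots,r_d)}$ is the set of colorings in $\mathcal{M}$ for which there exists at least one cube contained in $[-n,n]^d$ having a fair splitting with exactly $r_i$ cuts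 in the $i$-th dimension for each $i$ and granularity at least $1/n$. *)

theory Defs
  imports "HOL-Analysis.Analysis"
begin

text \<open>Points of R^d are vectors of type real^'d, where the finite type 'd has
  cardinality d (so d \<ge> 1 automatically). Colors are natural numbers 1..k.\<close>

definition meas_coloring :: "nat \<Rightarrow> (real^'d \<Rightarrow> nat) \<Rightarrow> bool" where
  "meas_coloring k f \<longleftrightarrow>
     (\<forall>x. f x \<in> {1..k}) \<and> (\<forall>c \<in> {1..k}. {x. f x = c} \<in> sets lebesgue)"

definition symbox :: "real \<Rightarrow> (real^'d) set" where
  "symbox N = cbox (- N *\<^sub>R One) (N *\<^sub>R One)"

definition col_dn :: "nat \<Rightarrow> (real^'d \<Rightarrow> nat) \<Rightarrow> (real^'d \<Rightarrow> nat) \<Rightarrow> real" where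
  "col_dn N f g =
     measure lebesgue {x \<in> symbox (real N). f x \<noteq> g x} / real N ^ CARD('d)"

definition col_dist :: "(real^'d \<Rightarrow> nat) \<Rightarrow> (real^'d \<Rightarrow> nat) \<Rightarrow> real" where
  "col_dist f g = (\<Sum>m. col_dn (Suc m) f g / 2 ^ (Suc m + 1))"

text \<open>A splitting of the cube cbox a (a + s One) with exactly r i cuts in dimension i:
  z i 0 = a$i < z i 1 < ... < z i (r i) < z i (r i + 1) = a$i + s,
  with granularity at least delta.\<close>
definition splitting ::
  "real^'d \<Rightarrow> real \<Rightarrow> ('d \<Rightarrow> nat) \<Rightarrow> ('d \<Rightarrow> nat \<Rightarrow> real) \<Rightarrow> bool" where
  "splitting a s r z \<longleftrightarrow>
     (\<forall>i. z i 0 = a $ i \<and> z i (r i + 1) = a $ i + s \<and>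
          (\<forall>j \<le> r i. z i j < z i (Suc j)))"

definition granularity_ge ::
  "('d \<Rightarrow> nat) \<Rightarrow> ('d \<Rightarrow> nat \<Rightarrow> real) \<Rightarrow> real \<Rightarrow> bool" where
  "granularity_ge r z delta \<longleftrightarrow> (\<forall>i. \<forall>j \<le> r i. z i (Suc j) - z i j \<ge> delta)"

definition cuboid_idx :: "('d \<Rightarrow> nat) \<Rightarrow> ('d \<Rightarrow> nat) set" where
  "cuboid_idx r = {J. \<forall>i. J i \<le> r i}"

definition cuboid :: "('d \<Rightarrow> nat \<Rightarrow> real) \<Rightarrow> ('d \<Rightarrow> nat) \<Rightarrow> (real^'d) set" where
  "cuboid z J = cbox (\<chi> i. z i (J i)) (\<chi> i. z i (Suc (J i)))"

definition fair_splitting ::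
  "nat \<Rightarrow> (real^'d \<Rightarrow> nat) \<Rightarrow> real^'d \<Rightarrow> real \<Rightarrow> ('d \<Rightarrow> nat) \<Rightarrow> ('d \<Rightarrow> nat \<Rightarrow> real) \<Rightarrow> bool"
  where
  "fair_splitting k f a s r z \<longleftrightarrow>
     (\<exists>F G. F \<union> G = cuboid_idx r \<and> F \<inter> G = {} \<and>
        (\<forall>c \<in> {1..k}.
           measure lebesgue ({x. f x = c} \<inter> (\<Union>J\<in>F. cuboid z J))
             = measure lebesgue ({x. f x = c} \<inter> cbox a (a + s *\<^sub>R One)) / 2 \<and>
           measure lebesgue ({x. f x = c} \<inter> (\<Union>J\<in>G. cuboid z J))
             = measure lebesgue ({x. f x = c} \<inter> cbox a (a + s *\<^sub>R One)) / 2))"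

definition B_set :: "nat \<Rightarrow> nat \<Rightarrow> ('d \<Rightarrow> nat) \<Rightarrow> (real^'d \<Rightarrow> nat) \<Rightarrow> bool" where
  "B_set k n r f \<longleftrightarrow>
     (\<exists>a s z. s > 0 \<and> cbox a (a + s *\<^sub>R One) \<subseteq> symbox (real n) \<and>
        splitting a s r z \<and> granularity_ge r z (1 / real n) \<and>
        fair_splitting k f a s r z)"

end

theory Submission
  imports Defs
begin

(*
  Let f_m \<in> B_n converge to g. Convergence in the metric d forces the disagreement sets of f_m
  and g inside [-n,n]^d to have measure tending to 0. Each f_m comes with a cube in [-n,n]^d, a
  splitting of it and a fair partition F_m of its cuboids. There are only finitely many possible
  partitions and all cut points lie in [-n,n], so along a subsequence the partition is a fixed F
  and every cut point converges. The limit cut points again form a splitting with granularity at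
  least 1/n, and the cuboids and the cube converge to their limits in measure; hence the measure
  of every colour class of f_m inside each union of cuboids converges to that of g, and the
  halving identities survive in the limit.
*)

lemma One_nth [simp]: "(One :: real^'n) $ i = 1"
  by (metis axis_in_Basis_iff cart_eq_inner_axis inner_sum_Basis Basis_real_def insertI1)

lemma cube_nth [simp]: "((a::real^'n) + s *\<^sub>R One) $ i = a $ i + s"
  by (simp only: vector_add_component vector_scaleR_component One_nth) simp

lemma mem_symbox: "x \<in> symbox N \<longleftrightarrow> (\<forall>i. \<bar>(x::real^'n) $ i\<bar> \<le> N)"
  unfolding symbox_def mem_box_cart
  by (simp only: vector_uminus_component vector_scaleR_component One_nth real_scaleR_def mult_1_right)
    (meson abs_le_iff minus_le_iff)

lemma symbox_eq_Icc: "symbox N = {- N *\<^sub>R One .. N *\<^sub>R One :: real^'n}"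
  by (simp add: symbox_def cbox_interval)

lemma measure_cbox_cart:
  "measure lebesgue (cbox u v :: (real^'n) set) = (\<Prod>i\<in>UNIV. max 0 (v$i - u$i))"
proof (cases "cbox u v = {}")
  case True
  then obtain i where "v$i < u$i"
    by (metis interval_ne_empty_cart(1) not_le)
  then have "(\<Prod>i\<in>UNIV. max 0 (v$i - u$i)) = 0"
    by (intro prod_zero bexI[of _ i]) auto
  with True show ?thesis
    by simp
next
  case False
  then show ?thesis
    by (simp add: content_cbox_cart interval_ne_empty_cart)
qed

lemma measure_symbox: "measure lebesgue (symbox (real N) :: (real^'n) set) = (2 * real N) ^ CARD('n)"
  unfolding symbox_def measure_cbox_cart
  by (simp only: vector_scaleR_component vector_uminus_component One_nth) (simp add: power_mult_distrib)

lemma measure_cbox_diff_tendsto: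
  fixes u v p q :: "nat \<Rightarrow> real^'n"
  assumes "u \<longlonglongrightarrow> u'" "v \<longlonglongrightarrow> v'" "p \<longlonglongrightarrow> p'" "q \<longlonglongrightarrow> q'"
  shows "(\<lambda>m. measure lebesgue (cbox (u m) (v m) - cbox (p m) (q m)))
           \<longlonglongrightarrow> measure lebesgue (cbox u' v' - cbox p' q')"
proof -
  have diff: "measure lebesgue (cbox a b - cbox c d)
      = measure lebesgue (cbox a b) - measure lebesgue (cbox a b \<inter> cbox c d)" for a b c d :: "real^'n"
  proof -
    have "cbox a b - cbox c d = cbox a b - (cbox a b \<inter> cbox c d)" by blast
    moreover have "measure lebesgue (cbox a b - (cbox a b \<inter> cbox c d))
        = measure lebesgue (cbox a b) - measure lebesgue (cbox a b \<inter> cbox c d)"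
      by (rule measure_Diff) (auto simp: fmeasurableD2)
    ultimately show ?thesis by simp
  qed
  have Int: "measure lebesgue (cbox a b \<inter> cbox c d)
      = (\<Prod>i\<in>UNIV. max 0 (min (b$i) (d$i) - max (a$i) (c$i)))" for a b c d :: "real^'n"
    by (simp add: Int_interval_cart interval_cbox measure_cbox_cart)
  show ?thesis
    unfolding diff Int measure_cbox_cart by (intro tendsto_intros tendsto_vec_nth assms)
qed

lemma measure_UN_cbox_diff_tendsto_0:
  fixes u v p q :: "nat \<Rightarrow> 'j \<Rightarrow> real^'n"
  assumes "finite F"
    and "\<And>J. J \<in> F \<Longrightarrow> (\<lambda>m. u m J) \<longlonglongrightarrow> u' J" "\<And>J. J \<in> F \<Longrightarrow> (\<lambda>m. v m J) \<longlonglongrightarrow> v' J"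
    and "\<And>J. J \<in> F \<Longrightarrow> (\<lambda>m. p m J) \<longlonglongrightarrow> u' J" "\<And>J. J \<in> F \<Longrightarrow> (\<lambda>m. q m J) \<longlonglongrightarrow> v' J"
  shows "(\<lambda>m. measure lebesgue ((\<Union>J\<in>F. cbox (u m J) (v m J)) - (\<Union>J\<in>F. cbox (p m J) (q m J))))
           \<longlonglongrightarrow> 0"
proof (rule Lim_null_comparison)
  let ?d = "\<lambda>m J. measure lebesgue (cbox (u m J) (v m J) - cbox (p m J) (q m J))"
  show "\<forall>\<^sub>F m in sequentially.
      norm (measure lebesgue ((\<Union>J\<in>F. cbox (u m J) (v m J)) - (\<Union>J\<in>F. cbox (p m J) (q m J))))
        \<le> (\<Sum>J\<in>F. ?d m J)"
  proof (intro always_eventually allI)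
    fix m
    have "measure lebesgue ((\<Union>J\<in>F. cbox (u m J) (v m J)) - (\<Union>J\<in>F. cbox (p m J) (q m J)))
        \<le> measure lebesgue (\<Union>J\<in>F. cbox (u m J) (v m J) - cbox (p m J) (q m J))"
      using assms(1) by (intro measure_mono_fmeasurable)
        (auto intro!: sets.Diff sets.finite_UN fmeasurable.finite_UN fmeasurable_Diff)
    also have "\<dots> \<le> (\<Sum>J\<in>F. ?d m J)"
      using assms(1) by (intro measure_UNION_le) (auto intro: fmeasurable_Diff)
    finally show "norm (measure lebesgue ((\<Union>J\<in>F. cbox (u m J) (v m J)) - (\<Union>J\<in>F. cbox (p m J) (q m J))))
        \<le> (\<Sum>J\<in>F. ?d m J)" by simp
  qed
  have "(\<lambda>m. \<Sum>J\<in>F. ?d m J) \<longlonglongrightarrow> (\<Sum>J\<in>F. measure lebesgue (cbox (u' J) (v' J) - cbox (u' J) (v' J)))"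
    using assms by (intro tendsto_sum measure_cbox_diff_tendsto)
  then show "(\<lambda>m. \<Sum>J\<in>F. ?d m J) \<longlonglongrightarrow> 0" by simp
qed

lemma measure_tendsto_if_Diff_tendsto_0:
  assumes "\<And>m. A m \<in> fmeasurable M" "L \<in> fmeasurable M"
    and "(\<lambda>m. measure M (A m - L)) \<longlonglongrightarrow> 0" "(\<lambda>m. measure M (L - A m)) \<longlonglongrightarrow> 0"
  shows "(\<lambda>m. measure M (A m)) \<longlonglongrightarrow> measure M L"
proof -
  have "(\<lambda>m. measure M (A m) - measure M L) \<longlonglongrightarrow> 0"
  proof (rule Lim_null_comparison)
    show "\<forall>\<^sub>F m in sequentially.
        norm (measure M (A m) - measure M L) \<le> measure M (A m - L) + measure M (L - A m)"
    proof (intro always_eventually allI)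
      fix m
      have "measure M (A m) - measure M L \<le> measure M (A m - L)"
        "measure M L - measure M (A m) \<le> measure M (L - A m)"
        using assms(1,2) by (auto intro: measure_diff_le_measure_setdiff)
      then show "norm (measure M (A m) - measure M L) \<le> measure M (A m - L) + measure M (L - A m)"
        by (simp add: abs_le_iff add_increasing add_increasing2)
    qed
    show "(\<lambda>m. measure M (A m - L) + measure M (L - A m)) \<longlonglongrightarrow> 0"
      using tendsto_add[OF assms(3,4)] by simp
  qed
  then show ?thesis by (rule LIM_zero_cancel)
qed

lemma measure_level_set_Int_Diff_le:
  assumes "S \<in> fmeasurable M" "A \<subseteq> S"
    and "{x. f x = c} \<in> sets M" "{x. g x = c} \<in> sets M" "A \<in> sets M" "B \<in> sets M"
    and "{x\<in>S. f x \<noteq> g x} \<in> sets M"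
  shows "measure M ({x. f x = c} \<inter> A - {x. g x = c} \<inter> B)
           \<le> measure M (A - B) + measure M {x\<in>S. f x \<noteq> g x}"
proof -
  have fin: "X \<in> fmeasurable M" if "X \<in> sets M" "X \<subseteq> S" for X
    using fmeasurableI2[OF assms(1)] that by blast
  have "measure M ({x. f x = c} \<inter> A - {x. g x = c} \<inter> B) \<le> measure M ((A - B) \<union> {x\<in>S. f x \<noteq> g x})"
    using assms by (intro measure_mono_fmeasurable fin) auto
  also have "\<dots> \<le> measure M (A - B) + measure M {x\<in>S. f x \<noteq> g x}"
    using assms by (intro measure_Un_le) auto
  finally show ?thesis .
qed

lemma measure_level_set_Int_tendsto:
  assumes "S \<in> fmeasurable M"
    and "\<And>m. {x. f m x = c} \<in> sets M" "{x. g x = c} \<in> sets M"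
    and "\<And>m. {x\<in>S. f m x \<noteq> g x} \<in> sets M" "(\<lambda>m. measure M {x\<in>S. f m x \<noteq> g x}) \<longlonglongrightarrow> 0"
    and "\<And>m. A m \<in> sets M" "A' \<in> sets M" "\<And>m. A m \<subseteq> S" "A' \<subseteq> S"
    and "(\<lambda>m. measure M (A m - A')) \<longlonglongrightarrow> 0" "(\<lambda>m. measure M (A' - A m)) \<longlonglongrightarrow> 0"
  shows "(\<lambda>m. measure M ({x. f m x = c} \<inter> A m)) \<longlonglongrightarrow> measure M ({x. g x = c} \<inter> A')"
proof (rule measure_tendsto_if_Diff_tendsto_0)
  show "{x. f m x = c} \<inter> A m \<in> fmeasurable M" for m
    using assms by (intro fmeasurableI2[OF assms(1)] sets.Int) blast+
  show "{x. g x = c} \<inter> A' \<in> fmeasurable M"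
    using assms by (intro fmeasurableI2[OF assms(1)] sets.Int) blast+
  let ?D = "\<lambda>m. measure M {x\<in>S. f m x \<noteq> g x}"
  have D_sym: "{x\<in>S. g x \<noteq> f m x} = {x\<in>S. f m x \<noteq> g x}" for m
    by auto
  show "(\<lambda>m. measure M ({x. f m x = c} \<inter> A m - {x. g x = c} \<inter> A')) \<longlonglongrightarrow> 0"
  proof (rule Lim_null_comparison)
    show "\<forall>\<^sub>F m in sequentially.
        norm (measure M ({x. f m x = c} \<inter> A m - {x. g x = c} \<inter> A')) \<le> measure M (A m - A') + ?D m"
      using assms by (intro always_eventually allI) (simp add: measure_level_set_Int_Diff_le)
    show "(\<lambda>m. measure M (A m - A') + ?D m) \<longlonglongrightarrow> 0"
      using tendsto_add[OF assms(10,5)] by simp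
  qed
  show "(\<lambda>m. measure M ({x. g x = c} \<inter> A' - {x. f m x = c} \<inter> A m)) \<longlonglongrightarrow> 0"
  proof (rule Lim_null_comparison)
    show "\<forall>\<^sub>F m in sequentially.
        norm (measure M ({x. g x = c} \<inter> A' - {x. f m x = c} \<inter> A m)) \<le> measure M (A' - A m) + ?D m"
    proof (intro always_eventually allI)
      fix m
      show "norm (measure M ({x. g x = c} \<inter> A' - {x. f m x = c} \<inter> A m)) \<le> measure M (A' - A m) + ?D m"
        using assms measure_level_set_Int_Diff_le[of S M A' g c "f m" "A m"]
        by (simp add: D_sym)
    qed
    show "(\<lambda>m. measure M (A' - A m) + ?D m) \<longlonglongrightarrow> 0"
      using tendsto_add[OF assms(11,5)] by simp
  qed
qed

lemma convergent_subseq_finite_family: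
  fixes x :: "nat \<Rightarrow> 'p \<Rightarrow> 'a::heine_borel"
  assumes "finite P" "\<And>p. p \<in> P \<Longrightarrow> bounded (range (\<lambda>m. x m p))"
  shows "\<exists>\<sigma> l. strict_mono \<sigma> \<and> (\<forall>p\<in>P. (\<lambda>m. x (\<sigma> m) p) \<longlonglongrightarrow> l p)"
  using assms
proof (induction P rule: finite_induct)
  case empty
  show ?case using strict_mono_id by blast
next
  case (insert p P)
  then obtain \<sigma> l where \<sigma>: "strict_mono \<sigma>" "\<forall>q\<in>P. (\<lambda>m. x (\<sigma> m) q) \<longlonglongrightarrow> l q"
    by blast
  have "bounded (range (\<lambda>m. x (\<sigma> m) p))"
    using insert.prems[of p] by (rule bounded_subset) auto
  then obtain l' \<tau> where \<tau>: "strict_mono \<tau>" "((\<lambda>m. x (\<sigma> m) p) \<circ> \<tau>) \<longlonglongrightarrow> l'"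
    using bounded_imp_convergent_subsequence by blast
  have "\<forall>q\<in>insert p P. (\<lambda>m. x (\<sigma> (\<tau> m)) q) \<longlonglongrightarrow> (l(p := l')) q"
    using \<tau>(2) \<sigma>(2) LIMSEQ_subseq_LIMSEQ[OF _ \<tau>(1)] insert.hyps(2) by (auto simp: o_def)
  then show ?case
    using strict_mono_o[OF \<sigma>(1) \<tau>(1)] unfolding o_def by blast
qed

lemma constant_subseq_if_finite_range:
  fixes F :: "nat \<Rightarrow> 'a"
  assumes "finite (range F)"
  obtains \<sigma> :: "nat \<Rightarrow> nat" and F0 where "strict_mono \<sigma>" "\<And>m. F (\<sigma> m) = F0"
proof -
  obtain F0 where "infinite (F -` {F0})"
    using inf_img_fin_dom[OF assms infinite_UNIV_nat] by blast
  then show ?thesis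
    using that[of "enumerate (F -` {F0})" F0] strict_mono_enumerate enumerate_in_set by blast
qed

lemma splitting_mono:
  assumes "splitting a s r z" "j \<le> j'" "j' \<le> Suc (r i)"
  shows "z i j \<le> z i j'"
  using assms(2,3)
proof (induction j' rule: dec_induct)
  case (step q)
  then have "z i q < z i (Suc q)"
    using assms(1) unfolding splitting_def by simp
  with step show ?case by simp
qed simp

lemma splitting_bounds:
  assumes "splitting a s r z" "j \<le> Suc (r i)"
  shows "a $ i \<le> z i j" "z i j \<le> a $ i + s"
  using splitting_mono[OF assms(1), of 0 j i] splitting_mono[OF assms(1), of j "Suc (r i)" i] assms
  unfolding splitting_def by auto

lemma splitting_pos:
  assumes "splitting a s r z"
  shows "s > 0"
proof -
  fix i
  have "z i 0 < z i 1"
    using assms unfolding splitting_def by (metis One_nat_def le0)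
  moreover have "z i 1 \<le> z i (Suc (r i))"
    by (rule splitting_mono[OF assms]) auto
  moreover have "z i 0 = a $ i" "z i (Suc (r i)) = a $ i + s"
    using assms unfolding splitting_def by auto
  ultimately show ?thesis by linarith
qed

lemma cuboid_subset_cube:
  assumes "splitting a s r z" "J \<in> cuboid_idx r"
  shows "cuboid z J \<subseteq> cbox a (a + s *\<^sub>R One)"
proof
  fix x assume "x \<in> cuboid z J"
  moreover have "a $ i \<le> z i (J i)" "z i (Suc (J i)) \<le> a $ i + s" for i
    using splitting_bounds[OF assms(1)] assms(2) unfolding cuboid_idx_def by (simp_all add: le_SucI)
  ultimately show "x \<in> cbox a (a + s *\<^sub>R One)"
    unfolding cuboid_def mem_box_cart cube_nth by (metis order.trans vec_lambda_beta)
qed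

lemma finite_cuboid_idx: "finite (cuboid_idx (r :: 'n::finite \<Rightarrow> nat))"
proof -
  have "cuboid_idx r = Pi\<^sub>E UNIV (\<lambda>i. {..r i})"
    by (auto simp: cuboid_idx_def PiE_UNIV_domain)
  then show ?thesis
    by (simp add: finite_PiE)
qed

lemma cuboids_Diff_tendsto_0:
  fixes z :: "nat \<Rightarrow> 'n::finite \<Rightarrow> nat \<Rightarrow> real"
  assumes "F \<subseteq> cuboid_idx r" "\<And>i j. j \<le> Suc (r i) \<Longrightarrow> (\<lambda>m. z m i j) \<longlonglongrightarrow> z' i j"
  shows "(\<lambda>m. measure lebesgue ((\<Union>J\<in>F. cuboid (z m) J) - (\<Union>J\<in>F. cuboid z' J))) \<longlonglongrightarrow> 0"
    and "(\<lambda>m. measure lebesgue ((\<Union>J\<in>F. cuboid z' J) - (\<Union>J\<in>F. cuboid (z m) J))) \<longlonglongrightarrow> 0"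
proof -
  have fin: "finite F"
    using assms(1) finite_cuboid_idx finite_subset by blast
  have lo: "(\<lambda>m. \<chi> i. z m i (J i)) \<longlonglongrightarrow> (\<chi> i. z' i (J i))"
    and hi: "(\<lambda>m. \<chi> i. z m i (Suc (J i))) \<longlonglongrightarrow> (\<chi> i. z' i (Suc (J i)))" if "J \<in> F" for J
  proof -
    have "J i \<le> r i" for i
      using that assms(1) unfolding cuboid_idx_def by blast
    then show "(\<lambda>m. \<chi> i. z m i (J i)) \<longlonglongrightarrow> (\<chi> i. z' i (J i))"
      "(\<lambda>m. \<chi> i. z m i (Suc (J i))) \<longlonglongrightarrow> (\<chi> i. z' i (Suc (J i)))"
      by (auto intro!: vec_tendstoI assms(2) simp: le_SucI)
  qed
  show "(\<lambda>m. measure lebesgue ((\<Union>J\<in>F. cuboid (z m) J) - (\<Union>J\<in>F. cuboid z' J))) \<longlonglongrightarrow> 0"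
    unfolding cuboid_def by (rule measure_UN_cbox_diff_tendsto_0[OF fin, where u'="\<lambda>J. \<chi> i. z' i (J i)"
        and v'="\<lambda>J. \<chi> i. z' i (Suc (J i))"]) (simp_all add: lo hi)
  show "(\<lambda>m. measure lebesgue ((\<Union>J\<in>F. cuboid z' J) - (\<Union>J\<in>F. cuboid (z m) J))) \<longlonglongrightarrow> 0"
    unfolding cuboid_def by (rule measure_UN_cbox_diff_tendsto_0[OF fin, where u'="\<lambda>J. \<chi> i. z' i (J i)"
        and v'="\<lambda>J. \<chi> i. z' i (Suc (J i))"]) (simp_all add: lo hi)
qed

lemma splitting_limit:
  fixes z :: "nat \<Rightarrow> 'n::finite \<Rightarrow> nat \<Rightarrow> real"
  assumes "\<And>m. splitting (a m) (s m) r (z m)" "\<And>m. granularity_ge r (z m) \<delta>" "\<delta> > 0"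
    and "\<And>i j. j \<le> Suc (r i) \<Longrightarrow> (\<lambda>m. z m i j) \<longlonglongrightarrow> z' i j"
  obtains a' s' where "a \<longlonglongrightarrow> a'" "s \<longlonglongrightarrow> s'" "splitting a' s' r z'" "granularity_ge r z' \<delta>"
proof -
  fix i0 :: 'n
  have s_lim: "s \<longlonglongrightarrow> z' i (Suc (r i)) - z' i 0" for i
  proof -
    have "(\<lambda>m. z m i (Suc (r i)) - z m i 0) \<longlonglongrightarrow> z' i (Suc (r i)) - z' i 0"
      by (intro tendsto_diff assms(4)) auto
    moreover have "s = (\<lambda>m. z m i (Suc (r i)) - z m i 0)"
      using assms(1) unfolding splitting_def by fastforce
    ultimately show ?thesis by simp
  qed
  have a_lim: "a \<longlonglongrightarrow> (\<chi> i. z' i 0)"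
  proof (rule vec_tendstoI)
    fix i
    have "a m $ i = z m i 0" for m
      using assms(1)[of m] unfolding splitting_def by auto
    then show "(\<lambda>m. a m $ i) \<longlonglongrightarrow> (\<chi> i. z' i 0) $ i"
      using assms(4)[of 0 i] by simp
  qed
  \<comment> \<open>Strictly increasing cut points could collapse in the limit; the uniform gap \<open>\<delta>\<close> prevents it.\<close>
  have gap: "\<delta> \<le> z' i (Suc j) - z' i j" if "j \<le> r i" for i j
  proof (rule LIMSEQ_le_const)
    show "(\<lambda>m. z m i (Suc j) - z m i j) \<longlonglongrightarrow> z' i (Suc j) - z' i j"
      using that by (intro tendsto_diff assms(4)) auto
    show "\<exists>N. \<forall>m\<ge>N. \<delta> \<le> z m i (Suc j) - z m i j"
      using assms(2) that unfolding granularity_ge_def by blast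
  qed
  have "splitting (\<chi> i. z' i 0) (z' i0 (Suc (r i0)) - z' i0 0) r z'"
    unfolding splitting_def
  proof (intro allI conjI impI)
    fix i j
    show "z' i 0 = (\<chi> i. z' i 0) $ i" by simp
    show "z' i (r i + 1) = (\<chi> i. z' i 0) $ i + (z' i0 (Suc (r i0)) - z' i0 0)"
      using LIMSEQ_unique[OF s_lim[of i] s_lim[of i0]] by simp
    assume "j \<le> r i"
    then show "z' i j < z' i (Suc j)"
      using gap[of j i] assms(3) by linarith
  qed
  moreover have "granularity_ge r z' \<delta>"
    unfolding granularity_ge_def using gap by blast
  ultimately show thesis
    using that a_lim s_lim by blast
qed

lemma cube_subset_symbox_iff:
  assumes "0 \<le> s"
  shows "cbox a (a + s *\<^sub>R One) \<subseteq> symbox N \<longleftrightarrow> a \<in> symbox N \<and> a + s *\<^sub>R One \<in> symbox N"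
proof -
  have "a \<le> a + s *\<^sub>R One"
    unfolding less_eq_vec_def cube_nth using assms by simp
  then have "a \<in> cbox a (a + s *\<^sub>R One)" "a + s *\<^sub>R One \<in> cbox a (a + s *\<^sub>R One)"
    by (simp_all add: cbox_interval)
  then show ?thesis
  proof (intro iffI conjI)
    assume "a \<in> symbox N \<and> a + s *\<^sub>R One \<in> symbox N"
    then show "cbox a (a + s *\<^sub>R One) \<subseteq> symbox N"
      by (simp add: symbox_eq_Icc cbox_interval)
  qed auto
qed

lemma cube_limit_subset_symbox:
  assumes "\<And>m. cbox (a m) (a m + s m *\<^sub>R One) \<subseteq> symbox N" "\<And>m. 0 \<le> s m" "0 \<le> s'"
    and "a \<longlonglongrightarrow> a'" "s \<longlonglongrightarrow> s'"
  shows "cbox a' (a' + s' *\<^sub>R One) \<subseteq> symbox N"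
proof -
  have closed: "closed (symbox N :: (real^'n) set)"
    unfolding symbox_def by (rule closed_cbox)
  have corners: "a m \<in> symbox N" "a m + s m *\<^sub>R One \<in> symbox N" for m
    using assms(1) cube_subset_symbox_iff[OF assms(2)] by blast+
  have "(\<lambda>m. a m + s m *\<^sub>R One) \<longlonglongrightarrow> a' + s' *\<^sub>R One"
    using assms(4,5) by (intro tendsto_intros)
  then have "a' \<in> symbox N" "a' + s' *\<^sub>R One \<in> symbox N"
    using closed_sequentially[OF closed corners(1) assms(4)]
      closed_sequentially[where f="\<lambda>m. a m + s m *\<^sub>R One", OF closed corners(2)] by blast+
  then show ?thesis
    using cube_subset_symbox_iff[OF assms(3)] by blast
qed

lemma splitting_point_bound:
  assumes "splitting a s r z" "cbox a (a + s *\<^sub>R One) \<subseteq> symbox N" "j \<le> Suc (r i)"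
  shows "\<bar>z i j\<bar> \<le> N"
proof -
  have "a \<in> symbox N" "a + s *\<^sub>R One \<in> symbox N"
    using assms(2) cube_subset_symbox_iff[of s a N] splitting_pos[OF assms(1)] by auto
  then have "\<bar>a $ i\<bar> \<le> N" "\<bar>a $ i + s\<bar> \<le> N"
    unfolding mem_symbox cube_nth by blast+
  then show ?thesis
    using splitting_bounds[OF assms(1,3)] by (auto simp: abs_le_iff)
qed

definition halves_colors :: "nat \<Rightarrow> (real^'n \<Rightarrow> nat) \<Rightarrow> (real^'n) set \<Rightarrow> (real^'n) set \<Rightarrow> bool"
  where "halves_colors k f A C \<longleftrightarrow>
    (\<forall>c\<in>{1..k}. measure lebesgue ({x. f x = c} \<inter> A) = measure lebesgue ({x. f x = c} \<inter> C) / 2)"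

definition fair_family ::
  "nat \<Rightarrow> (real^'n \<Rightarrow> nat) \<Rightarrow> real^'n \<Rightarrow> real \<Rightarrow> ('n \<Rightarrow> nat) \<Rightarrow> ('n \<Rightarrow> nat \<Rightarrow> real)
     \<Rightarrow> ('n \<Rightarrow> nat) set \<Rightarrow> bool"
  where "fair_family k f a s r z F \<longleftrightarrow> F \<subseteq> cuboid_idx r \<and>
    halves_colors k f (\<Union>J\<in>F. cuboid z J) (cbox a (a + s *\<^sub>R One)) \<and>
    halves_colors k f (\<Union>J\<in>cuboid_idx r - F. cuboid z J) (cbox a (a + s *\<^sub>R One))"

lemma fair_splitting_iff: "fair_splitting k f a s r z \<longleftrightarrow> (\<exists>F. fair_family k f a s r z F)"
proof -
  have partition: "F \<union> G = cuboid_idx r \<and> F \<inter> G = {} \<and> P \<longleftrightarrow> F \<subseteq> cuboid_idx r \<and> G = cuboid_idx r - F \<and> P"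
    for F G P by blast
  show ?thesis
    unfolding fair_splitting_def fair_family_def halves_colors_def
    by (simp only: ball_conj_distrib partition) simp
qed

lemma halves_colors_limit:
  assumes "\<And>m. halves_colors k (f m) (A m) (C m)"
    and "\<And>c. c \<in> {1..k} \<Longrightarrow>
      (\<lambda>m. measure lebesgue ({x. f m x = c} \<inter> A m)) \<longlonglongrightarrow> measure lebesgue ({x. g x = c} \<inter> A')"
    and "\<And>c. c \<in> {1..k} \<Longrightarrow>
      (\<lambda>m. measure lebesgue ({x. f m x = c} \<inter> C m)) \<longlonglongrightarrow> measure lebesgue ({x. g x = c} \<inter> C')"
  shows "halves_colors k g A' C'"
  unfolding halves_colors_def
proof
  fix c assume c: "c \<in> {1..k}"
  have "(\<lambda>m. measure lebesgue ({x. f m x = c} \<inter> A m)) = (\<lambda>m. measure lebesgue ({x. f m x = c} \<inter> C m) / 2)"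
    using assms(1) c unfolding halves_colors_def by blast
  then have "(\<lambda>m. measure lebesgue ({x. f m x = c} \<inter> A m)) \<longlonglongrightarrow> measure lebesgue ({x. g x = c} \<inter> C') / 2"
    using tendsto_divide[OF assms(3)[OF c] tendsto_const, of 2] by simp
  then show "measure lebesgue ({x. g x = c} \<inter> A') = measure lebesgue ({x. g x = c} \<inter> C') / 2"
    using LIMSEQ_unique assms(2)[OF c] by blast
qed

lemma sets_disagreement:
  assumes "meas_coloring k f" "meas_coloring k g"
  shows "{x. f x \<noteq> g x} \<in> sets lebesgue"
proof -
  have "{x. f x \<noteq> g x} = (\<Union>c\<in>{1..k}. {x. f x = c} - {x. g x = c})"
    using assms unfolding meas_coloring_def by auto
  then show ?thesis
    using assms unfolding meas_coloring_def by (auto intro!: sets.finite_UN sets.Diff)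
qed

lemma halves_colors_cuboids_limit:
  fixes f :: "nat \<Rightarrow> real^'n::finite \<Rightarrow> nat" and z :: "nat \<Rightarrow> 'n \<Rightarrow> nat \<Rightarrow> real"
  assumes "\<And>m. meas_coloring k (f m)" "meas_coloring k g"
    and "(\<lambda>m. measure lebesgue {x \<in> symbox N. f m x \<noteq> g x}) \<longlonglongrightarrow> 0"
    and "\<And>m. splitting (a m) (s m) r (z m)" "\<And>m. cbox (a m) (a m + s m *\<^sub>R One) \<subseteq> symbox N"
    and "splitting a' s' r z'" "cbox a' (a' + s' *\<^sub>R One) \<subseteq> symbox N"
    and "a \<longlonglongrightarrow> a'" "s \<longlonglongrightarrow> s'" "\<And>i j. j \<le> Suc (r i) \<Longrightarrow> (\<lambda>m. z m i j) \<longlonglongrightarrow> z' i j"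
    and "F \<subseteq> cuboid_idx r"
    and "\<And>m. halves_colors k (f m) (\<Union>J\<in>F. cuboid (z m) J) (cbox (a m) (a m + s m *\<^sub>R One))"
  shows "halves_colors k g (\<Union>J\<in>F. cuboid z' J) (cbox a' (a' + s' *\<^sub>R One))"
proof (rule halves_colors_limit[OF assms(12)])
  let ?S = "symbox N :: (real^'n) set"
  have S: "?S \<in> lmeasurable"
    by (simp add: symbox_def)
  have D: "{x \<in> ?S. f m x \<noteq> g x} \<in> sets lebesgue" for m
    using sets_disagreement[OF assms(1,2)] S by (simp add: Collect_conj_eq sets.Int fmeasurableD)
  have "finite F"
    using assms(11) finite_cuboid_idx finite_subset by blast
  then have cuboids: "(\<Union>J\<in>F. cuboid y J) \<in> sets lebesgue" for y :: "'n \<Rightarrow> nat \<Rightarrow> real"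
    unfolding cuboid_def by (intro sets.finite_UN) (auto intro: fmeasurableD)
  fix c assume c: "c \<in> {1..k}"
  have level: "{x. f m x = c} \<in> sets lebesgue" "{x. g x = c} \<in> sets lebesgue" for m
    using assms(1,2) c unfolding meas_coloring_def by auto
  show "(\<lambda>m. measure lebesgue ({x. f m x = c} \<inter> (\<Union>J\<in>F. cuboid (z m) J)))
      \<longlonglongrightarrow> measure lebesgue ({x. g x = c} \<inter> (\<Union>J\<in>F. cuboid z' J))"
  proof (rule measure_level_set_Int_tendsto[OF S level D assms(3) cuboids cuboids])
    show "(\<Union>J\<in>F. cuboid (z m) J) \<subseteq> ?S" for m
      using cuboid_subset_cube[OF assms(4)] assms(5,11) by blast
    show "(\<Union>J\<in>F. cuboid z' J) \<subseteq> ?S"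
      using cuboid_subset_cube[OF assms(6)] assms(7,11) by blast
  qed (use cuboids_Diff_tendsto_0[OF assms(11,10)] in auto)
  have corner: "(\<lambda>m. a m + s m *\<^sub>R One) \<longlonglongrightarrow> a' + s' *\<^sub>R One"
    using assms(8,9) by (intro tendsto_intros)
  have "(\<lambda>m. measure lebesgue (cbox (a m) (a m + s m *\<^sub>R One) - cbox a' (a' + s' *\<^sub>R One))) \<longlonglongrightarrow> 0"
    "(\<lambda>m. measure lebesgue (cbox a' (a' + s' *\<^sub>R One) - cbox (a m) (a m + s m *\<^sub>R One))) \<longlonglongrightarrow> 0"
    using measure_cbox_diff_tendsto[OF assms(8) corner tendsto_const tendsto_const,
        where p'=a' and q'="a' + s' *\<^sub>R One"]
      measure_cbox_diff_tendsto[OF tendsto_const tendsto_const assms(8) corner,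
        where u'=a' and v'="a' + s' *\<^sub>R One"]
    by simp_all
  then show "(\<lambda>m. measure lebesgue ({x. f m x = c} \<inter> cbox (a m) (a m + s m *\<^sub>R One)))
      \<longlonglongrightarrow> measure lebesgue ({x. g x = c} \<inter> cbox a' (a' + s' *\<^sub>R One))"
    using assms(5,7) by (intro measure_level_set_Int_tendsto[OF S level D assms(3)]) auto
qed

lemma col_dn_bounds:
  fixes f g :: "real^'n \<Rightarrow> nat"
  assumes "{x. f x \<noteq> g x} \<in> sets lebesgue" "N \<ge> 1"
  shows "0 \<le> col_dn N f g" "col_dn N f g \<le> 2 ^ CARD('n)"
proof -
  have "measure lebesgue {x \<in> symbox (real N). f x \<noteq> g x}
      \<le> measure lebesgue (symbox (real N) :: (real^'n) set)"
    using assms(1) by (intro measure_mono_fmeasurable) (auto simp: symbox_def Collect_conj_eq)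
  then show "col_dn N f g \<le> 2 ^ CARD('n)"
    using assms(2) unfolding col_dn_def measure_symbox by (simp add: pos_divide_le_eq power_mult_distrib)
qed (simp add: col_dn_def)

lemma summable_col_dn:
  fixes f g :: "real^'n \<Rightarrow> nat"
  assumes "{x. f x \<noteq> g x} \<in> sets lebesgue"
  shows "summable (\<lambda>m. col_dn (Suc m) f g / 2 ^ (Suc m + 1))"
proof -
  have "summable (\<lambda>m. 2 ^ CARD('n) * (1 / 2) ^ (Suc m + 1) :: real)"
    by (intro summable_mult summable_geometric_iff[THEN iffD2] summable_ignore_initial_segment) auto
  then show ?thesis
    by (rule summable_comparison_test[rotated])
      (use col_dn_bounds[OF assms] in \<open>auto simp: power_divide divide_right_mono\<close>)
qed

lemma col_dist_nonneg:
  assumes "{x. f x \<noteq> g x} \<in> sets lebesgue"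
  shows "0 \<le> col_dist f g"
  unfolding col_dist_def using summable_col_dn[OF assms] col_dn_bounds(1)[OF assms]
  by (intro suminf_nonneg) auto

lemma disagreement_le_col_dist:
  fixes f g :: "real^'n \<Rightarrow> nat"
  assumes "{x. f x \<noteq> g x} \<in> sets lebesgue" "N \<ge> 1"
  shows "measure lebesgue {x \<in> symbox (real N). f x \<noteq> g x}
           \<le> real N ^ CARD('n) * 2 ^ (N + 1) * col_dist f g"
proof -
  obtain m where m: "N = Suc m"
    using assms(2) by (cases N) auto
  have "col_dn (Suc m) f g / 2 ^ (Suc m + 1) \<le> col_dist f g"
    unfolding col_dist_def using sum_le_suminf[OF summable_col_dn[OF assms(1)], of "{m}"]
      col_dn_bounds(1)[OF assms(1)] by simp
  then show ?thesis
    using assms(2) m unfolding col_dn_def by (simp add: field_simps)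
qed

lemma disagreement_tendsto_0:
  fixes f :: "nat \<Rightarrow> real^'n \<Rightarrow> nat"
  assumes "\<And>m. meas_coloring k (f m)" "meas_coloring k g" "N \<ge> 1"
    and "(\<lambda>m. col_dist (f m) g) \<longlonglongrightarrow> 0"
  shows "(\<lambda>m. measure lebesgue {x \<in> symbox (real N). f m x \<noteq> g x}) \<longlonglongrightarrow> 0"
proof (rule Lim_null_comparison)
  let ?C = "real N ^ CARD('n) * 2 ^ (N + 1)"
  show "\<forall>\<^sub>F m in sequentially.
      norm (measure lebesgue {x \<in> symbox (real N). f m x \<noteq> g x}) \<le> ?C * col_dist (f m) g"
    using disagreement_le_col_dist[OF sets_disagreement[OF assms(1,2)] assms(3)] by simp
  show "(\<lambda>m. ?C * col_dist (f m) g) \<longlonglongrightarrow> 0"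
    using tendsto_mult_right_zero[OF assms(4)] by simp
qed

lemma convergent_fair_splittings:
  fixes f :: "nat \<Rightarrow> real^'n::finite \<Rightarrow> nat"
  assumes "\<And>m. B_set k n r (f m)"
  obtains \<sigma> a s z F z' where "strict_mono \<sigma>"
    and "\<And>m. cbox (a m) (a m + s m *\<^sub>R One) \<subseteq> symbox (real n)" "\<And>m. splitting (a m) (s m) r (z m)"
    and "\<And>m. granularity_ge r (z m) (1 / real n)" "\<And>m. fair_family k (f (\<sigma> m)) (a m) (s m) r (z m) F"
    and "\<And>i j. j \<le> Suc (r i) \<Longrightarrow> (\<lambda>m. z m i j) \<longlonglongrightarrow> z' i j"
proof -
  obtain a s z F where witness: "\<And>m. cbox (a m) (a m + s m *\<^sub>R One) \<subseteq> symbox (real n) \<and>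
      splitting (a m) (s m) r (z m) \<and> granularity_ge r (z m) (1 / real n) \<and>
      fair_family k (f m) (a m) (s m) r (z m) (F m)"
    using assms unfolding B_set_def fair_splitting_iff by metis
  have "range F \<subseteq> Pow (cuboid_idx r)"
    using witness unfolding fair_family_def by blast
  then have "finite (range F)"
    using finite_cuboid_idx finite_subset by blast
  then obtain \<sigma>1 :: "nat \<Rightarrow> nat" and F0 where \<sigma>1: "strict_mono \<sigma>1" "\<And>m. F (\<sigma>1 m) = F0"
    using constant_subseq_if_finite_range by metis
  have fair: "fair_family k (f (\<sigma>1 m)) (a (\<sigma>1 m)) (s (\<sigma>1 m)) r (z (\<sigma>1 m)) F0" for m
    using witness \<sigma>1(2) by metis
  define P where "P = (SIGMA i:UNIV. {..Suc (r i)})"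
  have "bounded (range (\<lambda>m. z (\<sigma>1 m) i j))" if "(i, j) \<in> P" for i j
    using that witness splitting_point_bound unfolding P_def bounded_real by blast
  then obtain \<sigma>2 l where \<sigma>2: "strict_mono \<sigma>2"
    and l: "\<forall>p\<in>P. (\<lambda>m. z (\<sigma>1 (\<sigma>2 m)) (fst p) (snd p)) \<longlonglongrightarrow> l p"
    using convergent_subseq_finite_family[of P "\<lambda>m p. z (\<sigma>1 m) (fst p) (snd p)"]
    unfolding P_def by fastforce
  show thesis
  proof (rule that[of "\<sigma>1 \<circ> \<sigma>2" "a \<circ> \<sigma>1 \<circ> \<sigma>2" "s \<circ> \<sigma>1 \<circ> \<sigma>2" "z \<circ> \<sigma>1 \<circ> \<sigma>2" F0 "\<lambda>i j. l (i, j)"])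
    show "strict_mono (\<sigma>1 \<circ> \<sigma>2)"
      using \<sigma>1(1) \<sigma>2 by (rule strict_mono_o)
    show "(\<lambda>m. (z \<circ> \<sigma>1 \<circ> \<sigma>2) m i j) \<longlonglongrightarrow> l (i, j)" if "j \<le> Suc (r i)" for i j
      using l that unfolding P_def by auto
  qed (use witness fair in auto)
qed

lemma B_set_limit:
  fixes f :: "nat \<Rightarrow> real^'n::finite \<Rightarrow> nat"
  assumes "n \<ge> 1" "\<And>m. meas_coloring k (f m)" "meas_coloring k g" "\<And>m. B_set k n r (f m)"
    and "(\<lambda>m. measure lebesgue {x \<in> symbox (real n). f m x \<noteq> g x}) \<longlonglongrightarrow> 0"
  shows "B_set k n r g"
proof -
  obtain \<sigma> a s z F z' where \<sigma>: "strict_mono \<sigma>"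
    and cube: "\<And>m. cbox (a m) (a m + s m *\<^sub>R One) \<subseteq> symbox (real n)"
    and split: "\<And>m. splitting (a m) (s m) r (z m)" and gran: "\<And>m. granularity_ge r (z m) (1 / real n)"
    and fair: "\<And>m. fair_family k (f (\<sigma> m)) (a m) (s m) r (z m) F"
    and z': "\<And>i j. j \<le> Suc (r i) \<Longrightarrow> (\<lambda>m. z m i j) \<longlonglongrightarrow> z' i j"
    using convergent_fair_splittings[OF assms(4)] by metis
  obtain a' s' where a': "a \<longlonglongrightarrow> a'" and s': "s \<longlonglongrightarrow> s'"
    and split': "splitting a' s' r z'" and gran': "granularity_ge r z' (1 / real n)"
    using splitting_limit[OF split gran _ z'] assms(1) by auto
  have "0 \<le> s m" "0 \<le> s'" for m
    using splitting_pos split split' less_imp_le by blast+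
  then have cube': "cbox a' (a' + s' *\<^sub>R One) \<subseteq> symbox (real n)"
    using cube_limit_subset_symbox[OF cube _ _ a' s'] by blast
  have disagreement: "(\<lambda>m. measure lebesgue {x \<in> symbox (real n). f (\<sigma> m) x \<noteq> g x}) \<longlonglongrightarrow> 0"
    using LIMSEQ_subseq_LIMSEQ[OF assms(5) \<sigma>] by (simp add: o_def)
  have "fair_family k g a' s' r z' F"
    using fair unfolding fair_family_def
    by (auto intro!: halves_colors_cuboids_limit[OF assms(2,3) disagreement split cube split' cube' a' s' z'])
  then show ?thesis
    unfolding B_set_def fair_splitting_iff
    using splitting_pos[OF split'] cube' split' gran' by blast
qed

theorem mainTheorem2:
  fixes k n :: nat and r :: "'d::finite \<Rightarrow> nat" and g :: "real^'d \<Rightarrow> nat"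
  assumes "k \<ge> 1" and "n \<ge> 1" and "\<forall>i. r i \<ge> 1"
    and "meas_coloring k g"
    and "\<forall>\<epsilon>>0. \<exists>f. meas_coloring k f \<and> B_set k n r f \<and> col_dist f g < \<epsilon>"
  shows "B_set k n r g"
proof -
  have "\<forall>m. \<exists>f. meas_coloring k f \<and> B_set k n r f \<and> col_dist f g < inverse (real (Suc m))"
    using assms(5) positive_imp_inverse_positive of_nat_0_less_iff zero_less_Suc by blast
  then obtain f where
    "\<forall>m. meas_coloring k (f m) \<and> B_set k n r (f m) \<and> col_dist (f m) g < inverse (real (Suc m))"
    by (rule choice[THEN exE])
  then have f: "\<And>m. meas_coloring k (f m)" "\<And>m. B_set k n r (f m)"
    and close: "\<And>m. col_dist (f m) g < inverse (real (Suc m))"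
    by auto
  have "(\<lambda>m. col_dist (f m) g) \<longlonglongrightarrow> 0"
    using col_dist_nonneg[OF sets_disagreement[OF f(1) assms(4)]] close
    by (intro tendsto_sandwich[OF _ _ tendsto_const LIMSEQ_inverse_real_of_nat] always_eventually allI)
      (auto intro: less_imp_le)
  then have "(\<lambda>m. measure lebesgue {x \<in> symbox (real n). f m x \<noteq> g x}) \<longlonglongrightarrow> 0"
    by (rule disagreement_tendsto_0[where f=f, OF f(1) assms(4,2)])
  then show ?thesis
    by (rule B_set_limit[where f=f, OF assms(2) f(1) assms(4) f(2)])
qed

end
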